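(* Let $A$ be a Noetherian integral domain with fraction field $K$, $M$ a finitely generated torsion-free $A$-module, $V=K\otimes_A M$ with $\dim_K V=n\ge 2$. Let $E(M\setminus\{0\})$ be the simplicial complex of all nonempty finite subsets of $M\setminus\{0\}$ and $E^*(M)$ its subcomplex of subsets of rank $<n$. Let $C_p(E(M\setminus\{0\}))$ be the free abelian group on ordered tuples $(v_0,\dots,v_p)$ of elements of $M\setminus\{0\}$ (ordered simplicial chains, with the usual alternating-sum boundary), $C_p(E^*(M))$ the subcomplex spanned by tuples of rank $<n$, and $\bar C_*=C_*(E(M\setminus\{0\}))/C_*(E^*(M))$. Then $\bar C_p=0$ for $p<n-1$, so every element of $\bar C_{n-1}$ is a cycle; composing the resulting map $\bar C_{n-1}\to H_{n-1}(\bar C_* )$ with the connecting homomorphism $H_{n-1}(\bar C_* )\to H_{n-2}(E^*(M))$, the inverse of the canonical subdivision isomorphism $H_{n-2}(\operatorname{sd}E^*(M))\xrightarrow{\sim}H_{n-2}(E^*(M))$, and the map $H_{n-2}(\operatorname{sd}E^*(M))\to H_{n-2}(T(V))=\operatorname{St}(V)$ induced by the simplicial map $\operatorname{sd}E^*(M)\to T(V)$ sending a vertex $Y$ of $\operatorname{sd}E^*(M)$ (a simplex of $E^*(M)$) to the $K$-span of $Y$, one obtains a homomorphism $\operatorname{ar}:\bar C_{n-1}\to \operatorname{St}(V)$ (with image in $\widetilde{\operatorname{St}}(V)$). Then for every $n$-tuple $Q=(v_0,\dots,v_{n-1})$ of elements of $M\setminus\{0\}$ spanning $V$, $\operatorname{ar}(Q)$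 equals the universal modular symbol $[v_0,\dots,v_{n-1}]$.
   Context: The rank of a subset of $M$ is the $K$-dimension of its span in $V$. $T(V)$ is the Tits building of $V$: vertices are nonzero proper subspaces of $V$, simplices are flags (nonempty chains under inclusion) of such subspaces; $\operatorname{St}(V)=H_{n-2}(T(V))$ is the Steinberg module, and $\widetilde{\operatorname{St}}(V)=\operatorname{St}(V)$ if $n>2$, while for $n=2$ it is the kernel of the augmentation $\operatorname{St}(V)=\mathbf{Z}[\text{lines of }V]\to\mathbf{Z}$ sending each line to $1$. For a simplicial complex $\Gamma$, $\operatorname{sd}\Gamma$ is its barycentric subdivision: vertices are the simplices of $\Gamma$, simplices are nonempty chains of simplices under inclusion; the subdivision isomorphism $H_*(\operatorname{sd}\Gamma)\cong H_*(\Gamma)$ is the canonical one, natural in $\Gamma$. Universal modular symbol: let $\Sigma_n$ be the simplicial complex whose vertices are the nonempty proper subsets of $\{0,\dots,n-1\}$ and whose simplices are chains of such subsets (the boundary of the barycentric subdivision of the simplex on $\{0,\dots,n-1\}$). Let $\zeta\in H_{n-2}(\Sigma_n)$ be the fundamental class given by the canonical orientation: the image under the connecting map of the class in $H_{n-1}$ of the subdivided simplex relative to its boundary corresponding to the oriented simplex $(0,1,\dots,n-1)$; for $n=2$ this is $\zeta=[\{1\}]-[\{0\}]$. For nonzero $v_0,\dots,v_{n-1}\in V$, let $\phi_Q:\Sigma_n\to T(V)$ send a vertex $I$ to the span of $\{v_i:i\in I\}$ (a simplicial map when the $v_i$ span $V$), and $[v_0,\dots,v_{n-1}]:=(\phi_Q)_*\zeta\in\operatorname{St}(V)$.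 *)

theory Defs
  imports Complex_Main "HOL-Computational_Algebra.Fraction_Field"
begin

definition is_ideal :: "'a::comm_ring_1 set \<Rightarrow> bool" where
  "is_ideal I \<longleftrightarrow> 0 \<in> I \<and> (\<forall>x\<in>I. \<forall>y\<in>I. x + y \<in> I) \<and> (\<forall>r. \<forall>x\<in>I. r * x \<in> I)"

definition noetherian_ring :: "'a::comm_ring_1 itself \<Rightarrow> bool" where
  "noetherian_ring _ \<longleftrightarrow> (\<forall>I::'a set. is_ideal I \<longrightarrow>
     (\<exists>G. finite G \<and> G \<subseteq> I \<and> I = {\<Sum>g\<in>G. c g * g | c. True}))"

text \<open>A finitely generated A-submodule M of a K-vector space (K = Frac A, scalars of A
  acting through the embedding a \<mapsto> Fract a 1).\<close>
definition fg_A_submodule :: "('a::idom fract \<Rightarrow> 'v::ab_group_add \<Rightarrow> 'v) \<Rightarrow> 'v set \<Rightarrow> bool" where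
  "fg_A_submodule scale M \<longleftrightarrow>
     0 \<in> M \<and> (\<forall>x\<in>M. \<forall>y\<in>M. x + y \<in> M) \<and> (\<forall>a. \<forall>x\<in>M. scale (Fract a 1) x \<in> M) \<and>
     (\<exists>G. finite G \<and> G \<subseteq> M \<and> M = {\<Sum>g\<in>G. scale (Fract (c g) 1) g | c. True})"

text \<open>A simplicial complex is given by its set of simplices (nonempty finite vertex sets).
  Ordered p-chains: finitely supported integer functions on (p+1)-tuples (lists) whose
  underlying vertex set is a simplex.\<close>

type_synonym 'w chain = "'w list \<Rightarrow> int"

definition supp :: "'w chain \<Rightarrow> 'w list set" where
  "supp c = {s. c s \<noteq> 0}"

definition chains :: "'w set set \<Rightarrow> nat \<Rightarrow> 'w chain set" where
  "chains X p = {c. finite (supp c) \<and> (\<forall>s\<in>supp c. length s = Suc p \<and> set s \<in> X)}"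

definition del :: "nat \<Rightarrow> 'w list \<Rightarrow> 'w list" where
  "del i s = take i s @ drop (Suc i) s"

text \<open>Alternating-sum boundary (unaugmented: the boundary of a 0-chain is 0).\<close>
definition bd :: "'w chain \<Rightarrow> 'w chain" where
  "bd c = (\<lambda>t. if t = [] then 0 else
      (\<Sum>s\<in>supp c. \<Sum>i<length s. if del i s = t then (-1) ^ i * c s else 0))"

definition cycles :: "'w set set \<Rightarrow> nat \<Rightarrow> 'w chain set" where
  "cycles X p = {c \<in> chains X p. bd c = (\<lambda>_. 0)}"

definition bdries :: "'w set set \<Rightarrow> nat \<Rightarrow> 'w chain set" where
  "bdries X p = bd ` chains X (Suc p)"

text \<open>Homology class of a p-cycle, as a coset of the boundaries; H_p(X) is the set of classes.\<close>
definition hcls :: "'w set set \<Rightarrow> nat \<Rightarrow> 'w chain \<Rightarrow> 'w chain set" where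
  "hcls X p z = {(\<lambda>s. z s + b s) | b. b \<in> bdries X p}"

definition homology :: "'w set set \<Rightarrow> nat \<Rightarrow> 'w chain set set" where
  "homology X p = hcls X p ` cycles X p"

definition chain_map :: "('w \<Rightarrow> 'u) \<Rightarrow> 'w chain \<Rightarrow> 'u chain" where
  "chain_map f c = (\<lambda>t. \<Sum>s\<in>{s \<in> supp c. map f s = t}. c s)"

definition hmap :: "'u set set \<Rightarrow> nat \<Rightarrow> ('w \<Rightarrow> 'u) \<Rightarrow> 'w chain set \<Rightarrow> 'u chain set" where
  "hmap Y p f h = hcls Y p (chain_map f (SOME z. z \<in> h))"

text \<open>Relative chains: for a subcomplex X0 of X, the class of a p-chain x of X in
  H_p(C(X)/C(X0)), represented as the set x + C_p(X0) + bd C_(p+1)(X).\<close>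
definition rel_cls :: "'w set set \<Rightarrow> 'w set set \<Rightarrow> nat \<Rightarrow> 'w chain \<Rightarrow> 'w chain set" where
  "rel_cls X X0 p x = {(\<lambda>s. x s + a s + bd b s) | a b. a \<in> chains X0 p \<and> b \<in> chains X (Suc p)}"

text \<open>Connecting homomorphism H_(p+1)(C(X)/C(X0)) \<rightarrow> H_p(X0): lift and take the boundary.\<close>
definition conn :: "'w set set \<Rightarrow> nat \<Rightarrow> 'w chain set \<Rightarrow> 'w chain set" where
  "conn X0 p h = hcls X0 p (bd (SOME x. x \<in> h))"

definition sd :: "'w set set \<Rightarrow> 'w set set set" where
  "sd X = {S. S \<noteq> {} \<and> finite S \<and> S \<subseteq> X \<and> (\<forall>A\<in>S. \<forall>B\<in>S. A \<subseteq> B \<or> B \<subseteq> A)}"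

text \<open>The canonical isomorphism H_*(sd X) \<cong> H_*(X) is induced by any simplicial
  approximation of the identity, i.e. a vertex map sending a simplex Y to a vertex of Y.\<close>
definition sd_approx :: "'w set \<Rightarrow> 'w" where
  "sd_approx Y = (SOME y. y \<in> Y)"

text \<open>Canonical subdivision chain of an ordered simplex (cone construction
  sd(s) = [set s] * sd(bd s)).\<close>
primrec sdc :: "nat \<Rightarrow> 'w list \<Rightarrow> 'w set chain" where
  "sdc 0 s = (\<lambda>t. if t = [set s] then 1 else 0)"
| "sdc (Suc k) s = (\<lambda>t. case t of [] \<Rightarrow> 0
     | Y # t' \<Rightarrow> if Y = set s then (\<Sum>i<length s. (-1) ^ i * sdc k (del i s) t') else 0)"

definition sd_chain :: "'w list \<Rightarrow> 'w set chain" where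
  "sd_chain s = sdc (length s - 1) s"

definition tits :: "('k::field \<Rightarrow> 'v::ab_group_add \<Rightarrow> 'v) \<Rightarrow> 'v set set set" where
  "tits scale = {F. F \<noteq> {} \<and> finite F \<and>
     (\<forall>W\<in>F. module.subspace scale W \<and> W \<noteq> {0} \<and> W \<noteq> UNIV) \<and>
     (\<forall>W1\<in>F. \<forall>W2\<in>F. W1 \<subseteq> W2 \<or> W2 \<subseteq> W1)}"

definition cplxE :: "'v::zero set \<Rightarrow> 'v set set" where
  "cplxE M = {S. S \<noteq> {} \<and> finite S \<and> S \<subseteq> M - {0}}"

definition cplxEstar :: "('k::field \<Rightarrow> 'v::ab_group_add \<Rightarrow> 'v) \<Rightarrow> 'v set \<Rightarrow> nat \<Rightarrow> 'v set set" where
  "cplxEstar scale M n = {S \<in> cplxE M. vector_space.dim scale S < n}"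

definition tuple_chain :: "'w list \<Rightarrow> 'w chain" where
  "tuple_chain s = (\<lambda>t. if t = s then 1 else 0)"

text \<open>The map ar on the element Q of C-bar_(n-1):
  St(V) <- H_(n-2)(sd E*) <-(canonical iso)^-1- H_(n-2)(E*) <-conn- H_(n-1)(C-bar).\<close>
definition ar :: "('k::field \<Rightarrow> 'v::ab_group_add \<Rightarrow> 'v) \<Rightarrow> 'v set \<Rightarrow> nat \<Rightarrow> 'v list \<Rightarrow> 'v set chain set" where
  "ar scale M n Q =
     hmap (tits scale) (n - 2) (module.span scale)
       (THE c. c \<in> homology (sd (cplxEstar scale M n)) (n - 2) \<and>
          hmap (cplxEstar scale M n) (n - 2) sd_approx c =
          conn (cplxEstar scale M n) (n - 2)
            (rel_cls (cplxE M) (cplxEstar scale M n) (n - 1) (tuple_chain Q)))"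

definition Sigma_cplx :: "nat \<Rightarrow> nat set set set" where
  "Sigma_cplx n = {S. S \<noteq> {} \<and> finite S \<and> (\<forall>I\<in>S. I \<noteq> {} \<and> I \<subset> {0..<n}) \<and>
     (\<forall>I\<in>S. \<forall>J\<in>S. I \<subseteq> J \<or> J \<subseteq> I)}"

text \<open>Fundamental class: connecting image of the class of the subdivided oriented simplex
  (0,...,n-1) relative to its boundary.\<close>
definition zeta :: "nat \<Rightarrow> nat set chain set" where
  "zeta n = hcls (Sigma_cplx n) (n - 2) (bd (sd_chain [0..<n]))"

definition modsym :: "('k::field \<Rightarrow> 'v::ab_group_add \<Rightarrow> 'v) \<Rightarrow> 'v list \<Rightarrow> 'v set chain set" where
  "modsym scale vs = hmap (tits scale) (length vs - 2)
      (\<lambda>I. module.span scale ((\<lambda>i. vs ! i) ` I)) (zeta (length vs))"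

end

theory Submission
  imports Defs "HOL-Library.Function_Algebras"
begin

text \<open>The boundary of the ordered simplex Q is a cycle of E*(M), and it represents the
  connecting image of the class of Q. Under the subdivision isomorphism it corresponds to the
  class of the subdivided boundary of Q, since subdivision followed by the simplicial
  approximation Y \<mapsto> (a vertex of Y) is chain homotopic to the identity (and vice versa on
  the subdivision), both homotopies being built by the method of acyclic carriers. Mapping the
  subdivided boundary of Q to the Tits building by taking spans gives the same chain as
  transporting the subdivided boundary of the standard simplex along i \<mapsto> v_i, which is the
  universal modular symbol, by naturality of subdivision.\<close>

section \<open>Chains as finitely supported functions\<close>

abbreviation fin :: "'w chain \<Rightarrow> bool" where "fin c \<equiv> finite (supp c)"

lemma sum_fun_apply: "sum f I x = (\<Sum>i\<in>I. f i x)"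
  by (induct I rule: infinite_finite_induct) auto

lemma supp_add: "supp (a + b) \<subseteq> supp a \<union> supp b"
  by (auto simp: supp_def)

lemma supp_diff: "supp (a - b) \<subseteq> supp a \<union> supp b"
  by (auto simp: supp_def)

lemma supp_zero [simp]: "supp 0 = {}"
  by (auto simp: supp_def)

lemma supp_scale: "supp (\<lambda>t. k * c t) \<subseteq> supp c"
  by (auto simp: supp_def)

lemma supp_sum: "supp (sum f I) \<subseteq> (\<Union>i\<in>I. supp (f i))"
  by (auto simp: supp_def sum_fun_apply elim!: sum.not_neutral_contains_not_neutral)

lemma fin_add [intro]: "fin a \<Longrightarrow> fin b \<Longrightarrow> fin (a + b)"
  by (meson finite_Un finite_subset supp_add)

lemma fin_diff [intro]: "fin a \<Longrightarrow> fin b \<Longrightarrow> fin (a - b)"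
  by (meson finite_Un finite_subset supp_diff)

lemma fin_scale [intro]: "fin c \<Longrightarrow> fin (\<lambda>t. k * c t)"
  by (rule finite_subset[OF supp_scale])

lemma fin_sum [intro]: "finite I \<Longrightarrow> (\<And>i. i \<in> I \<Longrightarrow> fin (f i)) \<Longrightarrow> fin (sum f I)"
  by (rule finite_subset[OF supp_sum]) auto

lemma supp_tuple_chain: "supp (tuple_chain s) = {s}"
  by (auto simp: supp_def tuple_chain_def)

lemma fin_tuple_chain [simp]: "fin (tuple_chain s)"
  by (simp add: supp_tuple_chain)

definition lin :: "('w list \<Rightarrow> 'u chain) \<Rightarrow> 'w chain \<Rightarrow> 'u chain" where
  "lin f c = (\<lambda>t. \<Sum>s\<in>supp c. c s * f s t)"

lemma lin_superset: "finite U \<Longrightarrow> supp c \<subseteq> U \<Longrightarrow> lin f c = (\<lambda>t. \<Sum>s\<in>U. c s * f s t)"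
  unfolding lin_def by (rule ext, rule sum.mono_neutral_left) (auto simp: supp_def)

lemma lin_add: "fin a \<Longrightarrow> fin b \<Longrightarrow> lin f (a + b) = lin f a + lin f b"
proof -
  assume a: "fin a" and b: "fin b"
  let ?U = "supp a \<union> supp b"
  have "lin f (a + b) = (\<lambda>t. \<Sum>s\<in>?U. (a + b) s * f s t)"
    by (rule lin_superset) (use a b supp_add in auto)
  moreover have "lin f a = (\<lambda>t. \<Sum>s\<in>?U. a s * f s t)" "lin f b = (\<lambda>t. \<Sum>s\<in>?U. b s * f s t)"
    by (rule lin_superset; use a b in auto)+
  ultimately show ?thesis by (auto simp: algebra_simps sum.distrib)
qed

lemma lin_diff: "fin a \<Longrightarrow> fin b \<Longrightarrow> lin f (a - b) = lin f a - lin f b"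
proof -
  assume a: "fin a" and b: "fin b"
  have "fin (a - b)" using a b by blast
  with b have "lin f a = lin f (a - b) + lin f b"
    using lin_add[of "a - b" b f] by simp
  then show ?thesis by (simp add: algebra_simps)
qed

lemma lin_zero [simp]: "lin f 0 = 0"
  by (auto simp: lin_def)

lemma lin_scale: "fin c \<Longrightarrow> lin f (\<lambda>t. k * c t) = (\<lambda>t. k * lin f c t)"
proof -
  assume c: "fin c"
  have "lin f (\<lambda>t. k * c t) = (\<lambda>t. \<Sum>s\<in>supp c. (k * c s) * f s t)"
    by (rule lin_superset) (use c supp_scale in auto)
  then show ?thesis by (simp add: lin_def sum_distrib_left mult.assoc)
qed

lemma lin_tuple_chain [simp]: "lin f (tuple_chain s) = f s"
  unfolding lin_def supp_tuple_chain by (simp add: tuple_chain_def)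

lemma lin_sum: "finite I \<Longrightarrow> (\<And>i. i \<in> I \<Longrightarrow> fin (c i)) \<Longrightarrow> lin f (sum c I) = (\<Sum>i\<in>I. lin f (c i))"
proof (induct I rule: finite_induct)
  case (insert x F)
  have "lin f (c x + sum c F) = lin f (c x) + lin f (sum c F)"
    using insert by (intro lin_add) auto
  also have "\<dots> = lin f (c x) + (\<Sum>i\<in>F. lin f (c i))"
    using insert by simp
  finally show ?case by (simp only: sum.insert[OF insert.hyps(1,2)])
qed simp

lemma lin_fun_diff: "lin (\<lambda>s. f s - g s) c = lin f c - lin g c"
  by (auto simp: lin_def algebra_simps sum_subtractf)

lemma lin_cong: "(\<And>s. s \<in> supp c \<Longrightarrow> f s = g s) \<Longrightarrow> lin f c = lin g c"
  by (auto simp: lin_def)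

lemma supp_lin: "supp (lin f c) \<subseteq> (\<Union>s\<in>supp c. supp (f s))"
  by (auto simp: lin_def supp_def elim!: sum.not_neutral_contains_not_neutral)

lemma fin_lin [intro]: "fin c \<Longrightarrow> (\<And>s. s \<in> supp c \<Longrightarrow> fin (f s)) \<Longrightarrow> fin (lin f c)"
  by (rule finite_subset[OF supp_lin]) auto

lemma lin_lin:
  assumes c: "fin c" and f: "\<And>s. s \<in> supp c \<Longrightarrow> fin (f s)"
  shows "lin g (lin f c) = lin (\<lambda>s. lin g (f s)) c"
proof -
  define U where "U = (\<Union>s\<in>supp c. supp (f s))"
  have U: "finite U" using c f by (auto simp: U_def)
  have f_U: "\<And>s. s \<in> supp c \<Longrightarrow> lin g (f s) = (\<lambda>t. \<Sum>u\<in>U. f s u * g u t)"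
    by (rule lin_superset[OF U]) (auto simp: U_def)
  have "lin g (lin f c) = (\<lambda>t. \<Sum>u\<in>U. lin f c u * g u t)"
    by (rule lin_superset[OF U]) (simp add: U_def supp_lin)
  also have "\<dots> = (\<lambda>t. \<Sum>u\<in>U. (\<Sum>s\<in>supp c. c s * f s u) * g u t)"
    by (simp add: lin_def)
  also have "\<dots> = (\<lambda>t. \<Sum>s\<in>supp c. c s * (\<Sum>u\<in>U. f s u * g u t))"
    by (rule ext) (simp add: sum_distrib_left sum_distrib_right mult.assoc sum.swap[of _ U])
  also have "\<dots> = lin (\<lambda>s. lin g (f s)) c"
    unfolding lin_def[of "\<lambda>s. lin g (f s)"] by (intro ext sum.cong) (simp_all add: f_U)
  finally show ?thesis .
qed

lemma lin_tuple_chain_id: "fin c \<Longrightarrow> lin tuple_chain c = c"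
  by (rule ext) (auto simp: lin_def tuple_chain_def supp_def if_distrib cong: if_cong)

section \<open>The boundary operator\<close>

definition bd_tuple :: "'w list \<Rightarrow> 'w chain" where
  "bd_tuple s = (\<lambda>t. if t = [] then 0 else \<Sum>i<length s. if del i s = t then (-1) ^ i else 0)"

lemma bd_lin: "bd c = lin bd_tuple c"
  unfolding bd_def lin_def bd_tuple_def
  by (rule ext) (auto simp: sum_distrib_left intro!: sum.cong)

lemma length_del: "i < length s \<Longrightarrow> length (del i s) = length s - 1"
  by (auto simp: del_def)

lemma set_del_subset: "set (del i s) \<subseteq> set s"
  by (auto simp: del_def dest: in_set_takeD in_set_dropD)

lemma del_map: "del i (map f s) = map f (del i s)"
  by (simp add: del_def take_map drop_map)

lemma del_Cons_0 [simp]: "del 0 (x # s) = s"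
  by (simp add: del_def)

lemma del_Cons_Suc [simp]: "del (Suc i) (x # s) = x # del i s"
  by (simp add: del_def)

lemma del_Nil [simp]: "del i [] = []"
  by (simp add: del_def)

lemma del_del: "i \<le> j \<Longrightarrow> del j (del i s) = del i (del (Suc j) s)"
proof (induct s arbitrary: i j)
  case (Cons x s)
  show ?case
  proof (cases i)
    case (Suc i')
    with Cons.prems obtain j' where "j = Suc j'" by (cases j) auto
    with Suc Cons show ?thesis by simp
  qed simp
qed simp

lemma supp_bd_tuple: "u \<in> supp (bd_tuple s) \<Longrightarrow> \<exists>i<length s. u = del i s"
  by (auto simp: supp_def bd_tuple_def elim!: sum.not_neutral_contains_not_neutral split: if_splits)

lemma fin_bd_tuple [simp]: "fin (bd_tuple s)"
proof -
  have "supp (bd_tuple s) \<subseteq> (\<lambda>i. del i s) ` {..<length s}"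
    using supp_bd_tuple by blast
  then show ?thesis by (rule finite_subset) auto
qed

lemma bd_tuple_sum:
  "2 \<le> length s \<Longrightarrow> bd_tuple s = (\<Sum>i<length s. (\<lambda>t. (-1) ^ i * tuple_chain (del i s) t))"
proof (rule ext)
  fix t assume s: "2 \<le> length s"
  then have "\<And>i. i < length s \<Longrightarrow> del i s \<noteq> []" "\<And>i. i < length s \<Longrightarrow> [] \<noteq> del i s"
    using length_del by fastforce+
  then show "bd_tuple s t = (\<Sum>i<length s. (\<lambda>t. (-1) ^ i * tuple_chain (del i s) t)) t"
    unfolding sum_fun_apply bd_tuple_def tuple_chain_def
    by (auto intro!: sum.cong sum.neutral[symmetric])
qed

lemma bd_tuple_short: "length s \<le> 1 \<Longrightarrow> bd_tuple s = 0"
proof (rule ext)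
  fix t assume "length s \<le> 1"
  then have "\<And>i. i < length s \<Longrightarrow> del i s = []" by (auto simp: del_def)
  then show "bd_tuple s t = 0 t" by (auto simp: bd_tuple_def intro!: sum.neutral)
qed

lemma bd_tuple_pair: "bd_tuple [x, y] = tuple_chain [y] - tuple_chain [x]"
  by (rule ext) (simp add: bd_tuple_sum sum_fun_apply numeral_2_eq_2 del_def)

text \<open>The face identity \<open>del_del\<close> pairs the terms of the double sum with opposite signs.\<close>
lemma alternating_sum_del_del:
  fixes h :: "'w list \<Rightarrow> int"
  shows "(\<Sum>i<length s. (-1) ^ i * (\<Sum>j<length s - 1. (-1) ^ j * h (del j (del i s)))) = 0"
proof -
  define m where "m = length s"
  define F where "F = (\<lambda>(i::nat, j::nat). (-1) ^ (i + j) * h (del j (del i s)))"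
  define A1 where "A1 = {(i, j). i < m \<and> j < m - 1 \<and> i \<le> j}"
  define A2 where "A2 = {(i, j). i < m \<and> j < m - 1 \<and> j < i}"
  have fin_A: "finite A1" "finite A2"
    by (rule finite_subset[of _ "{..<m} \<times> {..<m - 1}"], force simp: A1_def A2_def, simp)+
  have "(\<Sum>i<m. (-1) ^ i * (\<Sum>j<m - 1. (-1) ^ j * h (del j (del i s)))) =
      sum F ({..<m} \<times> {..<m - 1})"
    by (simp add: sum.cartesian_product[symmetric] sum_distrib_left F_def power_add mult.assoc)
  also have "{..<m} \<times> {..<m - 1} = A1 \<union> A2" by (auto simp: A1_def A2_def)
  also have "sum F (A1 \<union> A2) = sum F A1 + sum F A2"
    using fin_A by (rule sum.union_disjoint) (auto simp: A1_def A2_def)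
  also have "sum F A2 = sum (\<lambda>(i, j). F (Suc j, i)) A1"
    by (rule sum.reindex_bij_witness[where i="\<lambda>(i, j). (Suc j, i)" and j="\<lambda>(i, j). (j, i - 1)"])
      (auto simp: A1_def A2_def)
  also have "\<dots> = sum (\<lambda>p. - F p) A1"
  proof (rule sum.cong[OF refl])
    fix p assume "p \<in> A1"
    then obtain i j where "p = (i, j)" "i \<le> j" by (auto simp: A1_def)
    then show "(\<lambda>(i, j). F (Suc j, i)) p = - F p"
      using del_del[of i j s] by (simp add: F_def algebra_simps)
  qed
  finally show ?thesis by (simp add: m_def sum_negf)
qed

lemma bd_bd_tuple [simp]: "bd (bd_tuple s) = 0"
proof (cases "2 \<le> length s")
  case False
  then show ?thesis by (simp add: bd_tuple_short bd_lin)
next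
  case True
  have "bd (bd_tuple s) = (\<Sum>i<length s. (\<lambda>t. (-1) ^ i * bd_tuple (del i s) t))"
    using True by (simp add: bd_lin bd_tuple_sum lin_sum lin_scale fin_scale)
  also have "\<dots> = 0"
  proof (rule ext)
    fix t
    have "(\<Sum>i<length s. (-1) ^ i * bd_tuple (del i s) t) =
        (if t = [] then 0 else
         (\<Sum>i<length s. (-1) ^ i *
            (\<Sum>j<length s - 1. (-1) ^ j * (if del j (del i s) = t then 1 else 0))))"
      by (auto simp: bd_tuple_def length_del if_distrib cong: if_cong intro!: sum.cong)
    then show "(\<Sum>i<length s. (\<lambda>t. (-1) ^ i * bd_tuple (del i s) t)) t = 0 t"
      using alternating_sum_del_del[where s=s and h="\<lambda>u. if u = t then 1 else 0"]
      by (simp add: sum_fun_apply)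
  qed
  finally show ?thesis .
qed

lemma fin_bd [intro]: "fin c \<Longrightarrow> fin (bd c)"
  unfolding bd_lin by auto

lemma bd_lin_comm:
  "fin c \<Longrightarrow> (\<And>s. s \<in> supp c \<Longrightarrow> fin (f s)) \<Longrightarrow> bd (lin f c) = lin (\<lambda>s. bd (f s)) c"
  unfolding bd_lin by (rule lin_lin)

lemma bd_bd: "fin c \<Longrightarrow> bd (bd c) = 0"
proof -
  assume "fin c"
  then have "bd (bd c) = lin (\<lambda>s. bd (bd_tuple s)) c"
    unfolding bd_lin[of c] by (simp add: bd_lin_comm)
  then show ?thesis by (simp add: lin_def zero_fun_def)
qed

lemma bd_zero [simp]: "bd 0 = 0"
  by (simp add: bd_lin)

lemma bd_add: "fin a \<Longrightarrow> fin b \<Longrightarrow> bd (a + b) = bd a + bd b"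
  by (simp add: bd_lin lin_add)

lemma bd_diff: "fin a \<Longrightarrow> fin b \<Longrightarrow> bd (a - b) = bd a - bd b"
  by (simp add: bd_lin lin_diff)

lemma bd_tuple_chain [simp]: "bd (tuple_chain s) = bd_tuple s"
  by (simp add: bd_lin)

lemma bd_sum: "finite I \<Longrightarrow> (\<And>i. i \<in> I \<Longrightarrow> fin (c i)) \<Longrightarrow> bd (sum c I) = (\<Sum>i\<in>I. bd (c i))"
  unfolding bd_lin by (rule lin_sum)

lemma bd_scale: "fin c \<Longrightarrow> bd (\<lambda>t. k * c t) = (\<lambda>t. k * bd c t)"
  unfolding bd_lin by (rule lin_scale)

section \<open>Chain maps and cones\<close>

lemma chain_map_lin: "fin c \<Longrightarrow> chain_map f c = lin (\<lambda>s. tuple_chain (map f s)) c"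
  unfolding chain_map_def lin_def tuple_chain_def
  by (rule ext) (auto simp: sum.inter_filter intro!: sum.cong)

lemma fin_chain_map [intro]: "fin c \<Longrightarrow> fin (chain_map f c)"
  by (simp add: chain_map_lin fin_lin)

lemma supp_chain_map: "fin c \<Longrightarrow> supp (chain_map f c) \<subseteq> map f ` supp c"
  using supp_lin[of "\<lambda>s. tuple_chain (map f s)" c] by (auto simp: chain_map_lin supp_tuple_chain)

lemma chain_map_tuple_chain [simp]: "chain_map f (tuple_chain s) = tuple_chain (map f s)"
  by (simp add: chain_map_lin)

lemma chain_map_lin_comm:
  assumes c: "fin c" and g: "\<And>s. s \<in> supp c \<Longrightarrow> fin (g s)"
  shows "chain_map f (lin g c) = lin (\<lambda>s. chain_map f (g s)) c"
proof -
  have "chain_map f (lin g c) = lin (\<lambda>s. tuple_chain (map f s)) (lin g c)"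
    using c g by (intro chain_map_lin fin_lin)
  also have "\<dots> = lin (\<lambda>s. lin (\<lambda>s. tuple_chain (map f s)) (g s)) c"
    using c g by (rule lin_lin)
  also have "\<dots> = lin (\<lambda>s. chain_map f (g s)) c"
    using g by (intro lin_cong) (simp add: chain_map_lin)
  finally show ?thesis .
qed

lemma lin_chain_map: "fin c \<Longrightarrow> lin h (chain_map f c) = lin (\<lambda>s. h (map f s)) c"
  by (simp add: chain_map_lin lin_lin)

lemma chain_map_zero [simp]: "chain_map f 0 = 0"
  by (simp add: chain_map_lin)

lemma chain_map_add: "fin a \<Longrightarrow> fin b \<Longrightarrow> chain_map f (a + b) = chain_map f a + chain_map f b"
  by (simp add: chain_map_lin lin_add fin_add)

lemma chain_map_diff: "fin a \<Longrightarrow> fin b \<Longrightarrow> chain_map f (a - b) = chain_map f a - chain_map f b"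
  by (simp add: chain_map_lin lin_diff fin_diff)

lemma chain_map_sum:
  "finite I \<Longrightarrow> (\<And>i. i \<in> I \<Longrightarrow> fin (c i)) \<Longrightarrow> chain_map f (sum c I) = (\<Sum>i\<in>I. chain_map f (c i))"
  by (simp add: chain_map_lin lin_sum fin_sum)

lemma chain_map_scale: "fin c \<Longrightarrow> chain_map f (\<lambda>t. k * c t) = (\<lambda>t. k * chain_map f c t)"
  by (simp add: chain_map_lin lin_scale fin_scale)

lemma bd_tuple_map: "bd_tuple (map f s) = chain_map f (bd_tuple s)"
proof (cases "2 \<le> length s")
  case True
  then show ?thesis
    by (simp add: bd_tuple_sum chain_map_sum chain_map_scale fin_scale del_map)
qed (simp add: bd_tuple_short)

lemma chain_map_bd: "fin c \<Longrightarrow> chain_map f (bd c) = bd (chain_map f c)"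
  by (simp add: bd_lin chain_map_lin_comm lin_chain_map bd_tuple_map)

lemma chain_map_chain_map: "fin c \<Longrightarrow> chain_map f (chain_map g c) = chain_map (f \<circ> g) c"
  by (simp add: chain_map_lin[of c] chain_map_lin_comm)

definition cone :: "'w \<Rightarrow> 'w chain \<Rightarrow> 'w chain" where
  "cone Y c = (\<lambda>t. case t of [] \<Rightarrow> 0 | Y' # t' \<Rightarrow> if Y' = Y then c t' else 0)"

lemma supp_cone: "supp (cone Y c) = Cons Y ` supp c"
proof -
  have "t \<in> supp (cone Y c) \<longleftrightarrow> (\<exists>u. t = Y # u \<and> u \<in> supp c)" for t
    by (cases t) (auto simp: supp_def cone_def)
  then show ?thesis by auto
qed

lemma fin_cone [intro]: "fin c \<Longrightarrow> fin (cone Y c)"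
  by (simp add: supp_cone)

lemma cone_tuple_chain [simp]: "cone Y (tuple_chain u) = tuple_chain (Y # u)"
  by (rule ext) (auto simp: cone_def tuple_chain_def split: list.splits)

lemma cone_zero [simp]: "cone Y 0 = 0"
  by (rule ext) (auto simp: cone_def split: list.splits)

lemma cone_diff: "cone Y (a - b) = cone Y a - cone Y b"
  by (rule ext) (auto simp: cone_def split: list.splits)

lemma cone_scale: "cone Y (\<lambda>t. k * c t) = (\<lambda>t. k * cone Y c t)"
  by (rule ext) (auto simp: cone_def split: list.splits)

lemma cone_sum: "cone Y (sum c I) = (\<Sum>i\<in>I. cone Y (c i))"
  by (rule ext) (auto simp: cone_def sum_fun_apply split: list.splits)

lemma cone_lin: "fin c \<Longrightarrow> cone Y c = lin (\<lambda>u. tuple_chain (Y # u)) c"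
proof (rule ext)
  fix t assume c: "fin c"
  show "cone Y c t = lin (\<lambda>u. tuple_chain (Y # u)) c t"
  proof (cases t)
    case (Cons Y' t')
    have "lin (\<lambda>u. tuple_chain (Y # u)) c t =
        (\<Sum>s\<in>supp c. if s = t' then (if Y' = Y then c s else 0) else 0)"
      unfolding lin_def using Cons by (auto simp: tuple_chain_def intro!: sum.cong)
    also have "\<dots> = (if Y' = Y then c t' else 0)" using c by (auto simp: supp_def)
    finally show ?thesis using Cons by (simp add: cone_def)
  qed (simp add: cone_def lin_def tuple_chain_def)
qed

lemma chain_map_cone: "fin c \<Longrightarrow> chain_map g (cone Y c) = cone (g Y) (chain_map g c)"
  by (simp add: cone_lin[of c] cone_lin[of "chain_map g c"] fin_chain_map chain_map_lin_comm
      lin_chain_map)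

lemma bd_tuple_Cons: "2 \<le> length u \<Longrightarrow> bd_tuple (Y # u) = tuple_chain u - cone Y (bd_tuple u)"
proof -
  assume u: "2 \<le> length u"
  have "bd_tuple (Y # u) = (\<Sum>i<Suc (length u). (\<lambda>t. (-1) ^ i * tuple_chain (del i (Y # u)) t))"
    using u by (simp add: bd_tuple_sum)
  also have "\<dots> = tuple_chain u - (\<Sum>i<length u. (\<lambda>t. (-1) ^ i * tuple_chain (Y # del i u) t))"
    by (subst sum.lessThan_Suc_shift) (simp add: fun_eq_iff sum_fun_apply sum_negf)
  also have "(\<Sum>i<length u. (\<lambda>t. (-1) ^ i * tuple_chain (Y # del i u) t)) = cone Y (bd_tuple u)"
    using u by (simp add: bd_tuple_sum cone_sum cone_scale)
  finally show ?thesis .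
qed

lemma bd_cone:
  assumes c: "fin c" and long: "\<And>s. s \<in> supp c \<Longrightarrow> 2 \<le> length s"
  shows "bd (cone Y c) = c - cone Y (bd c)"
proof -
  have "bd (cone Y c) = lin (\<lambda>u. bd (tuple_chain (Y # u))) c"
    unfolding cone_lin[OF c] using c by (rule bd_lin_comm) auto
  also have "\<dots> = lin (\<lambda>u. tuple_chain u - cone Y (bd_tuple u)) c"
    by (rule lin_cong) (simp add: bd_tuple_Cons long)
  also have "\<dots> = lin tuple_chain c - lin (\<lambda>u. cone Y (bd_tuple u)) c"
    by (rule lin_fun_diff)
  also have "lin (\<lambda>u. cone Y (bd_tuple u)) c = cone Y (bd c)"
    using c by (simp add: bd_lin cone_lin[of "lin bd_tuple c"] cone_lin[of "bd_tuple _"] fin_lin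
        lin_lin)
  finally show ?thesis using c by (simp add: lin_tuple_chain_id fun_eq_iff)
qed

section \<open>Subdivision of ordered simplices\<close>

declare sdc.simps [simp del]

lemma sdc_0: "sdc 0 s = tuple_chain [set s]"
  by (simp add: tuple_chain_def sdc.simps)

lemma sdc_Suc: "sdc (Suc k) s = cone (set s) (\<Sum>i<length s. (\<lambda>t. (-1) ^ i * sdc k (del i s) t))"
  by (rule ext) (simp add: cone_def sum_fun_apply sdc.simps split: list.splits)

lemma fin_sdc [simp]: "fin (sdc k s)"
  by (induct k arbitrary: s) (simp_all add: sdc_0 sdc_Suc fin_cone fin_sum fin_scale)

abbreviation flag :: "'w set list \<Rightarrow> bool" where
  "flag t \<equiv> \<forall>A\<in>set t. \<forall>B\<in>set t. A \<subseteq> B \<or> B \<subseteq> A"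

lemma supp_sdc:
  assumes "length s = Suc k" and "t \<in> supp (sdc k s)"
  shows "length t = Suc k \<and> (\<forall>Y\<in>set t. Y \<subseteq> set s \<and> Y \<noteq> {}) \<and> flag t"
  using assms
proof (induct k arbitrary: s t)
  case 0
  then show ?case by (auto simp: sdc_0 supp_tuple_chain)
next
  case (Suc k)
  from Suc.prems(2) obtain t' where t: "t = set s # t'"
    and t': "t' \<in> supp (\<Sum>i<length s. (\<lambda>t. (-1) ^ i * sdc k (del i s) t))"
    by (auto simp: sdc_Suc supp_cone)
  then obtain i where i: "i < length s" and "t' \<in> supp (sdc k (del i s))"
    using supp_sum[of _ "{..<length s}"] supp_scale by blast
  moreover have "length (del i s) = Suc k"
    using i Suc.prems(1) by (simp add: length_del)
  ultimately have "length t' = Suc k" "\<forall>Y\<in>set t'. Y \<subseteq> set (del i s) \<and> Y \<noteq> {}" "flag t'"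
    using Suc.hyps by blast+
  moreover have "set s \<noteq> {}" using Suc.prems(1) by auto
  ultimately show ?case using set_del_subset[of i s] t by fastforce
qed

lemma fin_sd_chain [simp]: "fin (sd_chain s)"
  by (simp add: sd_chain_def)

lemma supp_sd_chain:
  assumes "s \<noteq> []" and "t \<in> supp (sd_chain s)"
  shows "length t = length s \<and> (\<forall>Y\<in>set t. Y \<subseteq> set s \<and> Y \<noteq> {}) \<and> flag t"
  using assms supp_sdc[of s "length s - 1" t] by (cases s) (auto simp: sd_chain_def)

lemma bd_sdc:
  "length s = Suc (Suc k) \<Longrightarrow> bd (sdc (Suc k) s) = (\<Sum>i<length s. (\<lambda>t. (-1) ^ i * sdc k (del i s) t))"
proof (induct k arbitrary: s)
  case 0
  then obtain a b where s: "s = [a, b]"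
    by (metis Suc_length_conv length_0_conv)
  have faces:
    "(\<Sum>i<length s. (\<lambda>t. (-1) ^ i * sdc 0 (del i s) t)) = tuple_chain [{b}] - tuple_chain [{a}]"
    by (rule ext) (simp add: s sum_fun_apply numeral_2_eq_2 del_def tuple_chain_def sdc_0)
  have "bd (sdc (Suc 0) s) = bd (tuple_chain [{a, b}, {b}] - tuple_chain [{a, b}, {a}])"
    unfolding sdc_Suc faces by (simp add: cone_diff s)
  also have "\<dots> = tuple_chain [{b}] - tuple_chain [{a}]"
    by (simp add: bd_diff bd_tuple_pair)
  finally show ?case using faces by simp
next
  case (Suc k)
  define C where "C = (\<Sum>i<length s. (\<lambda>t. (-1) ^ i * sdc (Suc k) (del i s) t))"
  have fin_C: "fin C" unfolding C_def by (intro fin_sum fin_scale) auto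
  have long_C: "2 \<le> length t" if "t \<in> supp C" for t
  proof -
    from that obtain i where i: "i < length s" and t: "t \<in> supp (sdc (Suc k) (del i s))"
      unfolding C_def using supp_sum[of _ "{..<length s}"] supp_scale by blast
    have "length (del i s) = Suc (Suc k)" using i Suc.prems by (simp add: length_del)
    from supp_sdc[OF this t] show ?thesis by simp
  qed
  have "bd C = (\<Sum>i<length s. bd (\<lambda>t. (-1) ^ i * sdc (Suc k) (del i s) t))"
    unfolding C_def by (rule bd_sum) auto
  also have "\<dots> = (\<Sum>i<length s. (\<lambda>t. (-1) ^ i *
      (\<Sum>j<length s - 1. (\<lambda>t. (-1) ^ j * sdc k (del j (del i s)) t)) t))"
  proof (rule sum.cong[OF refl])
    fix i assume "i \<in> {..<length s}"
    then have "length (del i s) = Suc (Suc k)" using Suc.prems by (simp add: length_del)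
    then show "bd (\<lambda>t. (-1) ^ i * sdc (Suc k) (del i s) t) =
        (\<lambda>t. (-1) ^ i * (\<Sum>j<length s - 1. (\<lambda>t. (-1) ^ j * sdc k (del j (del i s)) t)) t)"
      using Suc.hyps Suc.prems by (simp add: bd_scale length_del)
  qed
  also have "\<dots> = 0"
  proof (rule ext)
    fix x
    show "(\<Sum>i<length s. (\<lambda>t. (-1) ^ i *
        (\<Sum>j<length s - 1. (\<lambda>t. (-1) ^ j * sdc k (del j (del i s)) t)) t)) x = 0 x"
      using alternating_sum_del_del[where s=s and h="\<lambda>u. sdc k u x"] by (simp add: sum_fun_apply)
  qed
  finally have "bd C = 0" .
  then show ?case
    unfolding sdc_Suc[of "Suc k"] C_def[symmetric] by (simp add: bd_cone[OF fin_C long_C])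
qed

lemma bd_sd_chain: "s \<noteq> [] \<Longrightarrow> bd (sd_chain s) = lin sd_chain (bd_tuple s)"
proof -
  assume "s \<noteq> []"
  then obtain k where k: "length s = Suc k" by (cases s) auto
  show ?thesis
  proof (cases k)
    case 0
    then show ?thesis using k by (simp add: sd_chain_def sdc_0 bd_tuple_short)
  next
    case (Suc k')
    have "lin sd_chain (bd_tuple s) =
        lin sd_chain (\<Sum>i<length s. (\<lambda>t. (-1) ^ i * tuple_chain (del i s) t))"
      using k Suc by (simp add: bd_tuple_sum)
    also have "\<dots> = (\<Sum>i<length s. lin sd_chain (\<lambda>t. (-1) ^ i * tuple_chain (del i s) t))"
      by (rule lin_sum) auto
    also have "\<dots> = (\<Sum>i<length s. (\<lambda>t. (-1) ^ i * sdc k' (del i s) t))"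
      using k Suc by (intro sum.cong refl) (simp add: lin_scale sd_chain_def length_del)
    also have "\<dots> = bd (sd_chain s)" using k Suc by (simp add: sd_chain_def bd_sdc)
    finally show ?thesis ..
  qed
qed

lemma chain_map_image_sdc: "chain_map (image f) (sdc k s) = sdc k (map f s)"
proof (induct k arbitrary: s)
  case 0
  then show ?case by (simp add: sdc_0)
next
  case (Suc k)
  have "chain_map (image f) (sdc (Suc k) s) =
      cone (f ` set s) (chain_map (image f) (\<Sum>i<length s. (\<lambda>t. (-1) ^ i * sdc k (del i s) t)))"
    unfolding sdc_Suc by (rule chain_map_cone) (intro fin_sum fin_scale, auto)
  also have "chain_map (image f) (\<Sum>i<length s. (\<lambda>t. (-1) ^ i * sdc k (del i s) t)) =
      (\<Sum>i<length (map f s). (\<lambda>t. (-1) ^ i * sdc k (del i (map f s)) t))"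
    by (simp add: chain_map_sum chain_map_scale fin_scale Suc del_map)
  finally show ?case by (simp add: sdc_Suc)
qed

abbreviation subdiv :: "'w chain \<Rightarrow> 'w set chain" where
  "subdiv \<equiv> lin sd_chain"

lemma fin_subdiv [intro]: "fin c \<Longrightarrow> fin (subdiv c)"
  by (rule fin_lin) simp_all

lemma bd_subdiv:
  assumes c: "fin c" and ne: "\<And>s. s \<in> supp c \<Longrightarrow> s \<noteq> []"
  shows "bd (subdiv c) = subdiv (bd c)"
proof -
  have "bd (subdiv c) = lin (\<lambda>s. bd (sd_chain s)) c"
    using c by (rule bd_lin_comm) simp
  also have "\<dots> = lin (\<lambda>s. subdiv (bd_tuple s)) c"
    by (rule lin_cong) (simp add: bd_sd_chain ne)
  also have "\<dots> = subdiv (bd c)"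
    unfolding bd_lin using c by (rule lin_lin[symmetric]) auto
  finally show ?thesis .
qed

section \<open>Acyclic carriers\<close>

primrec cone_htpy :: "('w list \<Rightarrow> 'u chain) \<Rightarrow> ('w list \<Rightarrow> 'u chain) \<Rightarrow> ('w list \<Rightarrow> 'u chain) \<Rightarrow>
    ('w list \<Rightarrow> 'u) \<Rightarrow> nat \<Rightarrow> 'w list \<Rightarrow> 'u chain" where
  "cone_htpy F G H0 a 0 s = H0 s"
| "cone_htpy F G H0 a (Suc k) s = cone (a s) (F s - G s - lin (cone_htpy F G H0 a k) (bd_tuple s))"

text \<open>Method of acyclic carriers: a chain homotopy between the chain maps induced by F and G
  is built tuple by tuple as the cone with apex \<open>apex s\<close> over the cycle
  \<open>F s - G s - H (\<partial>s)\<close>, which lies in the carrier of s; coning stays in the carrier.\<close>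
locale acyclic_carrier =
  fixes P :: "'w list \<Rightarrow> bool"
    and F G H0 :: "'w list \<Rightarrow> 'u chain"
    and apex :: "'w list \<Rightarrow> 'u"
    and carrier :: "'w list \<Rightarrow> 'u list \<Rightarrow> bool"
  assumes P_del: "P s \<Longrightarrow> i < length s \<Longrightarrow> 2 \<le> length s \<Longrightarrow> P (del i s)"
    and P_nonempty: "P s \<Longrightarrow> s \<noteq> []"
    and F: "P s \<Longrightarrow> fin (F s) \<and> (\<forall>t\<in>supp (F s). length t = length s \<and> carrier s t) \<and>
      bd (F s) = lin F (bd_tuple s)"
    and G: "P s \<Longrightarrow> fin (G s) \<and> (\<forall>t\<in>supp (G s). length t = length s \<and> carrier s t) \<and>
      bd (G s) = lin G (bd_tuple s)"
    and H0: "P s \<Longrightarrow> length s = 1 \<Longrightarrow> fin (H0 s) \<and> (\<forall>t\<in>supp (H0 s). length t = 2 \<and> carrier s t) \<and>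
      bd (H0 s) = F s - G s"
    and carrier_del: "P s \<Longrightarrow> i < length s \<Longrightarrow> 2 \<le> length s \<Longrightarrow> carrier (del i s) t \<Longrightarrow> carrier s t"
    and carrier_cone: "P s \<Longrightarrow> carrier s t \<Longrightarrow> carrier s (apex s # t)"
begin

definition htpy :: "'w list \<Rightarrow> 'u chain" where
  "htpy s = cone_htpy F G H0 apex (length s - 1) s"

lemma bd_htpy_base:
  assumes s: "P s"
    and IH: "\<And>u. u \<in> supp (bd_tuple s) \<Longrightarrow> fin (htpy u) \<and> bd (htpy u) = F u - G u - lin htpy (bd_tuple u)"
  shows "bd (F s - G s - lin htpy (bd_tuple s)) = 0"
proof -
  have "bd (F s - G s - lin htpy (bd_tuple s)) =
      lin F (bd_tuple s) - lin G (bd_tuple s) - lin (\<lambda>u. bd (htpy u)) (bd_tuple s)"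
    using F[OF s] G[OF s] IH by (simp add: bd_diff fin_diff fin_lin bd_lin_comm)
  also have "lin (\<lambda>u. bd (htpy u)) (bd_tuple s) =
      lin F (bd_tuple s) - lin G (bd_tuple s) - lin (\<lambda>u. lin htpy (bd_tuple u)) (bd_tuple s)"
    using IH by (simp add: lin_cong[of _ "\<lambda>u. bd (htpy u)"] lin_fun_diff)
  also have "lin (\<lambda>u. lin htpy (bd_tuple u)) (bd_tuple s) = lin htpy (bd (bd_tuple s))"
    unfolding bd_lin[of "bd_tuple s"] by (rule lin_lin[symmetric]) auto
  finally show ?thesis by (simp only: bd_bd_tuple lin_zero diff_zero diff_self)
qed

lemma htpy_step:
  assumes s: "P s" "length s = Suc (Suc k)"
    and IH: "\<And>u. u \<in> supp (bd_tuple s) \<Longrightarrow> fin (htpy u) \<and>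
      (\<forall>t\<in>supp (htpy u). length t = Suc (Suc k) \<and> carrier s t) \<and>
      bd (htpy u) = F u - G u - lin htpy (bd_tuple u)"
  shows "fin (htpy s) \<and> (\<forall>t\<in>supp (htpy s). length t = Suc (length s) \<and> carrier s t) \<and>
    bd (htpy s) = F s - G s - lin htpy (bd_tuple s)"
proof -
  define c where "c = F s - G s - lin htpy (bd_tuple s)"
  have length_faces: "length u = Suc k" if "u \<in> supp (bd_tuple s)" for u
    using supp_bd_tuple[OF that] s(2) by (auto simp: length_del)
  have htpy_s: "htpy s = cone (apex s) c"
  proof -
    have "lin (cone_htpy F G H0 apex k) (bd_tuple s) = lin htpy (bd_tuple s)"
      by (rule lin_cong) (simp add: htpy_def length_faces)
    then show ?thesis by (simp add: htpy_def s(2) c_def)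
  qed
  have fin_c: "fin c"
    unfolding c_def using F[OF s(1)] G[OF s(1)] IH by (intro fin_diff fin_lin) auto
  have supp_c: "length t = Suc (Suc k) \<and> carrier s t" if "t \<in> supp c" for t
  proof -
    from that have "t \<in> supp (F s) \<or> t \<in> supp (G s) \<or> t \<in> supp (lin htpy (bd_tuple s))"
      unfolding c_def using supp_diff by blast
    then show ?thesis
    proof (elim disjE)
      assume "t \<in> supp (lin htpy (bd_tuple s))"
      then obtain u where "u \<in> supp (bd_tuple s)" "t \<in> supp (htpy u)" using supp_lin by blast
      then show ?thesis using IH by blast
    qed (use F G s in auto)
  qed
  have "bd c = 0"
    unfolding c_def by (rule bd_htpy_base[OF s(1)]) (use IH in blast)
  then have "bd (htpy s) = c"
    unfolding htpy_s using fin_c supp_c by (simp add: bd_cone)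
  moreover have "fin (htpy s)" unfolding htpy_s using fin_c by auto
  moreover have "\<forall>t\<in>supp (htpy s). length t = Suc (length s) \<and> carrier s t"
    unfolding htpy_s supp_cone using supp_c carrier_cone[OF s(1)] s(2) by auto
  ultimately show ?thesis by (simp add: c_def)
qed

lemma htpy:
  "P s \<Longrightarrow> fin (htpy s) \<and> (\<forall>t\<in>supp (htpy s). length t = Suc (length s) \<and> carrier s t) \<and>
    bd (htpy s) = F s - G s - lin htpy (bd_tuple s)"
proof (induct "length s" arbitrary: s rule: less_induct)
  case less
  obtain k where k: "length s = Suc k" using P_nonempty[OF less.prems] by (cases s) auto
  show ?case
  proof (cases k)
    case 0
    then show ?thesis
      using H0[OF less.prems] k by (simp add: htpy_def bd_tuple_short numeral_2_eq_2)
  next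
    case (Suc k')
    show ?thesis
    proof (rule htpy_step[OF less.prems])
      show "length s = Suc (Suc k')" using k Suc by simp
      fix u assume "u \<in> supp (bd_tuple s)"
      then obtain i where i: "i < length s" "u = del i s" using supp_bd_tuple by blast
      then have "P u" "length u < length s" "length u = Suc k'"
        using P_del[OF less.prems] k Suc by (auto simp: length_del)
      then show "fin (htpy u) \<and> (\<forall>t\<in>supp (htpy u). length t = Suc (Suc k') \<and> carrier s t) \<and>
          bd (htpy u) = F u - G u - lin htpy (bd_tuple u)"
        using less.hyps[of u] carrier_del[OF less.prems i(1)] i k Suc by auto
    qed
  qed
qed

lemma bd_lin_htpy:
  assumes c: "fin c" and P: "\<And>s. s \<in> supp c \<Longrightarrow> P s"
  shows "bd (lin htpy c) = lin F c - lin G c - lin htpy (bd c)"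
proof -
  have "bd (lin htpy c) = lin (\<lambda>s. bd (htpy s)) c"
    using c htpy P by (intro bd_lin_comm) auto
  also have "\<dots> = lin (\<lambda>s. F s - G s - lin htpy (bd_tuple s)) c"
    using htpy P by (intro lin_cong) auto
  also have "\<dots> = lin F c - lin G c - lin (\<lambda>s. lin htpy (bd_tuple s)) c"
    by (simp add: lin_fun_diff)
  also have "lin (\<lambda>s. lin htpy (bd_tuple s)) c = lin htpy (bd c)"
    unfolding bd_lin using c by (rule lin_lin[symmetric]) auto
  finally show ?thesis .
qed

end

section \<open>Homology classes\<close>

lemma chains_fin: "c \<in> chains X p \<Longrightarrow> fin c"
  by (simp add: chains_def)

lemma chains_supp: "c \<in> chains X p \<Longrightarrow> s \<in> supp c \<Longrightarrow> length s = Suc p \<and> set s \<in> X"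
  by (simp add: chains_def)

lemma chainsI: "fin c \<Longrightarrow> (\<And>s. s \<in> supp c \<Longrightarrow> length s = Suc p \<and> set s \<in> X) \<Longrightarrow> c \<in> chains X p"
  by (simp add: chains_def)

lemma chains_add: "a \<in> chains X p \<Longrightarrow> b \<in> chains X p \<Longrightarrow> a + b \<in> chains X p"
  unfolding chains_def using supp_add by blast

lemma chains_diff: "a \<in> chains X p \<Longrightarrow> b \<in> chains X p \<Longrightarrow> a - b \<in> chains X p"
  unfolding chains_def using supp_diff by blast

lemma zero_in_chains: "0 \<in> chains X p"
  by (simp add: chains_def)

lemma lin_in_chains: "fin c \<Longrightarrow> (\<And>s. s \<in> supp c \<Longrightarrow> f s \<in> chains X p) \<Longrightarrow> lin f c \<in> chains X p"
  unfolding chains_def using supp_lin[of f c] by (auto intro!: fin_lin)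

lemma chain_map_in_chains:
  "c \<in> chains X p \<Longrightarrow> (\<And>A. A \<in> X \<Longrightarrow> f ` A \<in> Y) \<Longrightarrow> chain_map f c \<in> chains Y p"
  unfolding chains_def using supp_chain_map[of c f] by auto

lemma cycles_iff: "z \<in> cycles X p \<longleftrightarrow> z \<in> chains X p \<and> bd z = 0"
  by (simp add: cycles_def zero_fun_def)

lemma hcls_eq_image: "hcls X p z = {z + bd b | b. b \<in> chains X (Suc p)}"
  by (auto simp: hcls_def bdries_def plus_fun_def)

lemma hcls_add_bd: "fin z \<Longrightarrow> b \<in> chains X (Suc p) \<Longrightarrow> hcls X p (z + bd b) = hcls X p z"
proof -
  assume z: "fin z" and b: "b \<in> chains X (Suc p)"
  have fin_b: "fin b" using b by (rule chains_fin)
  show ?thesis unfolding hcls_eq_image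
  proof (intro set_eqI iffI)
    fix x assume "x \<in> {z + bd b + bd b' |b'. b' \<in> chains X (Suc p)}"
    then obtain b' where b': "b' \<in> chains X (Suc p)" "x = z + bd b + bd b'" by auto
    then have "x = z + bd (b + b')" using fin_b chains_fin[OF b'(1)] by (simp add: bd_add add.assoc)
    then show "x \<in> {z + bd b |b. b \<in> chains X (Suc p)}" using chains_add[OF b b'(1)] by blast
  next
    fix x assume "x \<in> {z + bd b |b. b \<in> chains X (Suc p)}"
    then obtain b' where b': "b' \<in> chains X (Suc p)" "x = z + bd b'" by auto
    then have "x = z + bd b + bd (b' - b)" using fin_b chains_fin[OF b'(1)] by (simp add: bd_diff)
    then show "x \<in> {z + bd b + bd b' |b'. b' \<in> chains X (Suc p)}"
      using chains_diff[OF b'(1) b] by blast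
  qed
qed

lemma hcls_self: "z \<in> hcls X p z"
  unfolding hcls_eq_image using zero_in_chains by force

lemma hcls_eq_iff:
  "fin z \<Longrightarrow> hcls X p z = hcls X p z' \<longleftrightarrow> (\<exists>b\<in>chains X (Suc p). z' = z + bd b)"
  using hcls_self[of z' X p] hcls_add_bd[of z _ X p] unfolding hcls_eq_image by blast

lemma hmap_hcls:
  assumes z: "z \<in> chains X p" and f: "\<And>A. A \<in> X \<Longrightarrow> f ` A \<in> Y"
  shows "hmap Y p f (hcls X p z) = hcls Y p (chain_map f z)"
proof -
  obtain b where b: "b \<in> chains X (Suc p)" "(SOME w. w \<in> hcls X p z) = z + bd b"
    using someI[of "\<lambda>w. w \<in> hcls X p z", OF hcls_self] unfolding hcls_eq_image by blast
  have fin: "fin z" "fin b" using z b chains_fin by auto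
  have "chain_map f (z + bd b) = chain_map f z + bd (chain_map f b)"
    using fin by (simp add: chain_map_add chain_map_bd fin_bd)
  moreover have "chain_map f b \<in> chains Y (Suc p)" using b(1) f by (rule chain_map_in_chains)
  ultimately show ?thesis unfolding hmap_def b(2) using fin by (simp add: hcls_add_bd fin_chain_map)
qed

lemma conn_rel_cls: "fin x \<Longrightarrow> conn X0 p (rel_cls X X0 (Suc p) x) = hcls X0 p (bd x)"
proof -
  assume x: "fin x"
  let ?R = "rel_cls X X0 (Suc p) x"
  have "(\<lambda>s. x s + 0 s + bd 0 s) \<in> ?R"
    unfolding rel_cls_def using zero_in_chains by blast
  then obtain a b where ab: "a \<in> chains X0 (Suc p)" "b \<in> chains X (Suc (Suc p))"
    "(SOME y. y \<in> ?R) = x + a + bd b"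
    using someI[of "\<lambda>y. y \<in> ?R"] unfolding rel_cls_def plus_fun_def by blast
  have "fin a" "fin b" using ab chains_fin by auto
  then have "bd (SOME y. y \<in> ?R) = bd x + bd a"
    using ab(3) x by (simp add: bd_add fin_add fin_bd bd_bd)
  then show ?thesis unfolding conn_def using hcls_add_bd[OF fin_bd[OF x] ab(1)] by simp
qed

section \<open>The subdivision isomorphism\<close>

lemma sd_approx_mem: "Y \<noteq> {} \<Longrightarrow> sd_approx Y \<in> Y"
  unfolding sd_approx_def by (rule someI_ex) auto

lemma sd_approx_singleton [simp]: "sd_approx {v} = v"
  using sd_approx_mem[of "{v}"] by auto

lemma sd_chain_singleton [simp]: "sd_chain [v] = tuple_chain [{v}]"
  by (simp add: sd_chain_def sdc_0)

definition approx_sd :: "'w list \<Rightarrow> 'w chain" where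
  "approx_sd s = chain_map sd_approx (sd_chain s)"

definition sd_approx_tuple :: "'w set list \<Rightarrow> 'w set chain" where
  "sd_approx_tuple s = sd_chain (map sd_approx s)"

lemma supp_approx_sd:
  assumes "s \<noteq> []" and "t \<in> supp (approx_sd s)"
  shows "length t = length s \<and> set t \<subseteq> set s"
proof -
  obtain u where u: "u \<in> supp (sd_chain s)" "t = map sd_approx u"
    using assms(2) supp_chain_map[of "sd_chain s" sd_approx] by (auto simp: approx_sd_def)
  with supp_sd_chain[OF assms(1)] have u_props: "length u = length s" "\<forall>Y\<in>set u. Y \<subseteq> set s \<and> Y \<noteq> {}"
    by auto
  have "set t \<subseteq> set s"
  proof
    fix y assume "y \<in> set t"
    then obtain Y where "Y \<in> set u" "y = sd_approx Y" using u(2) by auto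
    with u_props(2) sd_approx_mem[of Y] show "y \<in> set s" by blast
  qed
  with u(2) u_props(1) show ?thesis by simp
qed

lemma bd_approx_sd: "s \<noteq> [] \<Longrightarrow> bd (approx_sd s) = lin approx_sd (bd_tuple s)"
proof -
  assume s: "s \<noteq> []"
  have "bd (approx_sd s) = chain_map sd_approx (bd (sd_chain s))"
    by (simp add: approx_sd_def chain_map_bd)
  also have "\<dots> = chain_map sd_approx (subdiv (bd_tuple s))"
    using s by (simp add: bd_sd_chain)
  also have "\<dots> = lin approx_sd (bd_tuple s)"
    by (simp add: chain_map_lin_comm approx_sd_def[abs_def])
  finally show ?thesis .
qed

lemma fin_sd_approx_tuple: "fin (sd_approx_tuple s)"
  by (simp add: sd_approx_tuple_def)

lemma supp_sd_approx_tuple: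
  assumes s: "s \<noteq> []" "\<forall>Y\<in>set s. Y \<noteq> {}" and t: "t \<in> supp (sd_approx_tuple s)"
  shows "length t = length s \<and> (\<forall>Y\<in>set t. Y \<noteq> {} \<and> Y \<subseteq> \<Union>(set s)) \<and> flag t"
proof -
  have approx: "sd_approx ` set s \<subseteq> \<Union>(set s)"
    using s(2) sd_approx_mem by blast
  have "map sd_approx s \<noteq> []" using s(1) by simp
  from supp_sd_chain[OF this] t
  have t_props: "length t = length s" "\<forall>Y\<in>set t. Y \<subseteq> sd_approx ` set s \<and> Y \<noteq> {}" "flag t"
    by (auto simp: sd_approx_tuple_def)
  have "\<forall>Y\<in>set t. Y \<subseteq> \<Union>(set s)"
    using t_props(2) approx by (meson subset_trans)
  with t_props show ?thesis by simp
qed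

lemma bd_sd_approx_tuple: "s \<noteq> [] \<Longrightarrow> bd (sd_approx_tuple s) = lin sd_approx_tuple (bd_tuple s)"
proof -
  assume "s \<noteq> []"
  then have "bd (sd_approx_tuple s) = subdiv (chain_map sd_approx (bd_tuple s))"
    by (simp add: sd_approx_tuple_def bd_sd_chain bd_tuple_map)
  also have "\<dots> = lin (\<lambda>u. sd_chain (map sd_approx u)) (bd_tuple s)"
    by (rule lin_chain_map) simp
  finally show ?thesis unfolding sd_approx_tuple_def[abs_def] .
qed

text \<open>A tuple is carried by its vertex set, a cone with apex any of its vertices.\<close>
interpretation approx_sd: acyclic_carrier "\<lambda>s. s \<noteq> []" approx_sd tuple_chain "\<lambda>_. 0" hd
  "\<lambda>s t. set t \<subseteq> set s"
proof
  fix s :: "'w list" and i t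
  assume s: "s \<noteq> []"
  show "fin (approx_sd s) \<and> (\<forall>t\<in>supp (approx_sd s). length t = length s \<and> set t \<subseteq> set s) \<and>
      bd (approx_sd s) = lin approx_sd (bd_tuple s)"
    using supp_approx_sd[OF s] bd_approx_sd[OF s] by (auto simp: approx_sd_def)
  show "fin (tuple_chain s) \<and> (\<forall>t\<in>supp (tuple_chain s). length t = length s \<and> set t \<subseteq> set s) \<and>
      bd (tuple_chain s) = lin tuple_chain (bd_tuple s)"
    by (simp add: supp_tuple_chain lin_tuple_chain_id)
  show "length s = 1 \<Longrightarrow> fin 0 \<and> (\<forall>t\<in>supp 0. length t = 2 \<and> set t \<subseteq> set s) \<and>
      bd 0 = approx_sd s - tuple_chain s"
    by (cases s) (auto simp: approx_sd_def)
  show "set (hd s # t) \<subseteq> set s" if "set t \<subseteq> set s" using that s by simp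
  show "set t \<subseteq> set s" if "set t \<subseteq> set (del i s)" using that set_del_subset[of i s] by blast
  show "2 \<le> length s \<Longrightarrow> del i s \<noteq> []" if "i < length s" using that length_del[of i s] by auto
qed

text \<open>A flag is carried by the flags of nonempty subsets of its top element, a cone with that top
  element as apex.\<close>
interpretation sd_approx_tuple: acyclic_carrier
  "\<lambda>s. s \<noteq> [] \<and> (\<forall>Y\<in>set s. Y \<noteq> {}) \<and> flag s" sd_approx_tuple tuple_chain
  "\<lambda>s. tuple_chain [hd s, {sd_approx (hd s)}]" "\<lambda>s. \<Union>(set s)"
  "\<lambda>s t. (\<forall>Y\<in>set t. Y \<noteq> {} \<and> Y \<subseteq> \<Union>(set s)) \<and> flag t"
proof
  fix s :: "'w set list" and i t
  assume s: "s \<noteq> [] \<and> (\<forall>Y\<in>set s. Y \<noteq> {}) \<and> flag s"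
  show "fin (sd_approx_tuple s) \<and>
      (\<forall>t\<in>supp (sd_approx_tuple s).
         length t = length s \<and> (\<forall>Y\<in>set t. Y \<noteq> {} \<and> Y \<subseteq> \<Union>(set s)) \<and> flag t) \<and>
      bd (sd_approx_tuple s) = lin sd_approx_tuple (bd_tuple s)"
  proof -
    have "\<forall>t\<in>supp (sd_approx_tuple s).
        length t = length s \<and> (\<forall>Y\<in>set t. Y \<noteq> {} \<and> Y \<subseteq> \<Union>(set s)) \<and> flag t"
      using s supp_sd_approx_tuple[of s] by simp
    moreover have "bd (sd_approx_tuple s) = lin sd_approx_tuple (bd_tuple s)"
      using s by (simp add: bd_sd_approx_tuple)
    ultimately show ?thesis using fin_sd_approx_tuple by blast
  qed
  have "\<forall>Y\<in>set s. Y \<subseteq> \<Union>(set s)" by blast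
  with s show "fin (tuple_chain s) \<and>
      (\<forall>t\<in>supp (tuple_chain s). length t = length s \<and> (\<forall>Y\<in>set t. Y \<noteq> {} \<and> Y \<subseteq> \<Union>(set s)) \<and> flag t) \<and>
      bd (tuple_chain s) = lin tuple_chain (bd_tuple s)"
    by (simp add: supp_tuple_chain lin_tuple_chain_id)
  show "fin (tuple_chain [hd s, {sd_approx (hd s)}]) \<and>
      (\<forall>t\<in>supp (tuple_chain [hd s, {sd_approx (hd s)}]).
         length t = 2 \<and> (\<forall>Y\<in>set t. Y \<noteq> {} \<and> Y \<subseteq> \<Union>(set s)) \<and> flag t) \<and>
      bd (tuple_chain [hd s, {sd_approx (hd s)}]) = sd_approx_tuple s - tuple_chain s"
    if "length s = 1"
  proof -
    from that obtain Y where Y: "s = [Y]" by (cases s) auto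
    with s have "sd_approx Y \<in> Y" using sd_approx_mem by simp
    with Y s show ?thesis by (simp add: supp_tuple_chain bd_tuple_pair sd_approx_tuple_def)
  qed
  show "(\<forall>Y\<in>set (\<Union>(set s) # t). Y \<noteq> {} \<and> Y \<subseteq> \<Union>(set s)) \<and> flag (\<Union>(set s) # t)"
    if t: "(\<forall>Y\<in>set t. Y \<noteq> {} \<and> Y \<subseteq> \<Union>(set s)) \<and> flag t"
  proof -
    from s have "\<Union>(set s) \<noteq> {}" by (cases s) auto
    with t show ?thesis by simp
  qed
  show "(\<forall>Y\<in>set t. Y \<noteq> {} \<and> Y \<subseteq> \<Union>(set s)) \<and> flag t"
    if "(\<forall>Y\<in>set t. Y \<noteq> {} \<and> Y \<subseteq> \<Union>(set (del i s))) \<and> flag t"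
  proof -
    have "\<Union>(set (del i s)) \<subseteq> \<Union>(set s)" using set_del_subset[of i s] by (rule Union_mono)
    with that have "\<forall>Y\<in>set t. Y \<subseteq> \<Union>(set s)" by (meson subset_trans)
    with that show ?thesis by simp
  qed
  show "del i s \<noteq> [] \<and> (\<forall>Y\<in>set (del i s). Y \<noteq> {}) \<and> flag (del i s)"
    if "i < length s" "2 \<le> length s"
  proof -
    have "del i s \<noteq> []" using that length_del[of i s] by auto
    moreover have "set (del i s) \<subseteq> set s" by (rule set_del_subset)
    ultimately show ?thesis using s by blast
  qed
qed simp

definition simplicial_complex :: "'w set set \<Rightarrow> bool" where
  "simplicial_complex X \<longleftrightarrow> (\<forall>Z\<in>X. Z \<noteq> {} \<and> (\<forall>Y. Y \<subseteq> Z \<longrightarrow> Y \<noteq> {} \<longrightarrow> Y \<in> X))"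

lemma image_image_mem_sd:
  assumes "\<And>Z. Z \<in> X \<Longrightarrow> f ` Z \<in> Y" and "A \<in> sd X"
  shows "image f ` A \<in> sd Y"
proof -
  have "\<forall>B\<in>image f ` A. \<forall>C\<in>image f ` A. B \<subseteq> C \<or> C \<subseteq> B"
    using assms(2) unfolding sd_def by (blast dest: image_mono)
  with assms show ?thesis unfolding sd_def by auto
qed

context
  fixes X :: "'w set set"
  assumes X: "simplicial_complex X"
begin

lemma face_mem: "Z \<in> X \<Longrightarrow> Y \<subseteq> Z \<Longrightarrow> Y \<noteq> {} \<Longrightarrow> Y \<in> X"
  using X unfolding simplicial_complex_def by blast

lemma mem_nonempty: "Z \<in> X \<Longrightarrow> Z \<noteq> {}"
  using X unfolding simplicial_complex_def by blast

lemma mem_sd_flag: "set s \<in> sd X \<Longrightarrow> s \<noteq> [] \<and> (\<forall>Y\<in>set s. Y \<noteq> {}) \<and> flag s"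
  using mem_nonempty by (auto simp: sd_def)

lemma flag_mem_sd:
  assumes "t \<noteq> []" "\<forall>Y\<in>set t. Y \<noteq> {} \<and> Y \<subseteq> Z" "flag t" "Z \<in> X"
  shows "set t \<in> sd X"
  using assms face_mem by (auto simp: sd_def)

lemma Union_mem: "A \<in> sd X \<Longrightarrow> \<Union>A \<in> X"
  using Union_in_chain[of A A] by (auto simp: sd_def subset_chain_def)

lemma sd_approx_image_mem: "A \<in> sd X \<Longrightarrow> sd_approx ` A \<in> X"
proof -
  assume A: "A \<in> sd X"
  then have A_sub: "A \<noteq> {}" "A \<subseteq> X" by (auto simp: sd_def)
  have "sd_approx ` A \<subseteq> \<Union>A"
  proof
    fix y assume "y \<in> sd_approx ` A"
    then obtain Y where Y: "Y \<in> A" "y = sd_approx Y" by blast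
    with A_sub(2) have "Y \<noteq> {}" using mem_nonempty by blast
    with Y sd_approx_mem[of Y] show "y \<in> \<Union>A" by blast
  qed
  moreover have "sd_approx ` A \<noteq> {}" using A_sub(1) by simp
  ultimately show ?thesis using face_mem[OF Union_mem[OF A]] by simp
qed

lemma sd_chain_mem_chains: "length u = Suc q \<Longrightarrow> set u \<in> X \<Longrightarrow> sd_chain u \<in> chains (sd X) q"
proof (rule chainsI)
  fix t assume u: "length u = Suc q" "set u \<in> X" and t: "t \<in> supp (sd_chain u)"
  have "u \<noteq> []" using u by auto
  from supp_sd_chain[OF this t] u(1)
  have "length t = Suc q" "\<forall>Y\<in>set t. Y \<noteq> {} \<and> Y \<subseteq> set u" "flag t"
    by auto
  moreover from this(1) have "t \<noteq> []" by auto
  ultimately show "length t = Suc q \<and> set t \<in> sd X"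
    using flag_mem_sd[of t "set u"] u(2) by simp
qed simp

lemma subdiv_mem_chains: "c \<in> chains X q \<Longrightarrow> subdiv c \<in> chains (sd X) q"
  by (auto intro: lin_in_chains sd_chain_mem_chains dest: chains_supp chains_fin)

lemma subdiv_mem_cycles: "z \<in> cycles X p \<Longrightarrow> subdiv z \<in> cycles (sd X) p"
proof -
  assume z: "z \<in> cycles X p"
  then have zc: "z \<in> chains X p" and "bd z = 0" by (auto simp: cycles_iff)
  moreover have "bd (subdiv z) = subdiv (bd z)"
    using chains_supp[OF zc] by (intro bd_subdiv chains_fin[OF zc]) force
  ultimately show ?thesis using subdiv_mem_chains[OF zc] by (simp add: cycles_iff)
qed

lemma approx_sd_htpy_mem_chains:
  assumes u: "length u = Suc q" "set u \<in> X"
  shows "approx_sd.htpy u \<in> chains X (Suc q)"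
proof (rule chainsI)
  have "u \<noteq> []" using u by auto
  note htpy = approx_sd.htpy[OF this]
  then show "fin (approx_sd.htpy u)" by simp
  fix t assume "t \<in> supp (approx_sd.htpy u)"
  with htpy u(1) have "length t = Suc (Suc q)" "set t \<subseteq> set u" by auto
  moreover from this(1) have "set t \<noteq> {}" by auto
  ultimately show "length t = Suc (Suc q) \<and> set t \<in> X"
    using face_mem[OF u(2)] by simp
qed

lemma sd_approx_tuple_htpy_mem_chains:
  assumes s: "length s = Suc q" "set s \<in> sd X"
  shows "sd_approx_tuple.htpy s \<in> chains (sd X) (Suc q)"
proof (rule chainsI)
  note htpy = sd_approx_tuple.htpy[OF mem_sd_flag[OF s(2)]]
  then show "fin (sd_approx_tuple.htpy s)" by simp
  fix t assume "t \<in> supp (sd_approx_tuple.htpy s)"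
  with htpy s(1) have "length t = Suc (Suc q)" "\<forall>Y\<in>set t. Y \<noteq> {} \<and> Y \<subseteq> \<Union>(set s)" "flag t"
    by auto
  moreover from this(1) have "t \<noteq> []" by auto
  ultimately show "length t = Suc (Suc q) \<and> set t \<in> sd X"
    using flag_mem_sd[of t "\<Union>(set s)"] Union_mem[OF s(2)] by simp
qed

lemma hmap_sd_approx_subdiv:
  assumes z: "z \<in> cycles X p"
  shows "hmap X p sd_approx (hcls (sd X) p (subdiv z)) = hcls X p z"
proof -
  have zc: "z \<in> chains X p" and bz: "bd z = 0" using z by (auto simp: cycles_iff)
  have fz: "fin z" using zc by (rule chains_fin)
  have ne: "s \<noteq> []" if "s \<in> supp z" for s using chains_supp[OF zc that] by auto
  define h where "h = lin approx_sd.htpy z"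
  have h: "h \<in> chains X (Suc p)"
    unfolding h_def using zc
    by (auto intro: lin_in_chains approx_sd_htpy_mem_chains dest: chains_supp chains_fin)
  have "bd h = lin approx_sd z - z"
    unfolding h_def using approx_sd.bd_lin_htpy[OF fz ne] fz bz by (simp add: lin_tuple_chain_id)
  then have "chain_map sd_approx (subdiv z) = z + bd h"
    using fz by (simp add: chain_map_lin_comm approx_sd_def[abs_def])
  then have "hcls X p (chain_map sd_approx (subdiv z)) = hcls X p z"
    using hcls_add_bd[OF fz h] by simp
  then show ?thesis
    using hmap_hcls[OF subdiv_mem_chains[OF zc] sd_approx_image_mem] by simp
qed

lemma hcls_sd_eq_if_sd_approx:
  assumes z: "z \<in> cycles (sd X) p" and z': "z' \<in> cycles (sd X) p"
    and eq: "hcls X p (chain_map sd_approx z) = hcls X p (chain_map sd_approx z')"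
  shows "hcls (sd X) p z = hcls (sd X) p z'"
proof -
  have zc: "z \<in> chains (sd X) p" "z' \<in> chains (sd X) p" and bz: "bd z = 0" "bd z' = 0"
    using z z' by (auto simp: cycles_iff)
  have fz: "fin z" "fin z'" using zc chains_fin by auto
  obtain w where w: "w \<in> chains X (Suc p)" "chain_map sd_approx z' = chain_map sd_approx z + bd w"
    using eq hcls_eq_iff[where X=X and p=p and z="chain_map sd_approx z" and z'="chain_map sd_approx z'"]
      fin_chain_map[OF fz(1)] by blast
  have fw: "fin w" using w(1) by (rule chains_fin)
  define y where "y = z' - z"
  have fy: "fin y" and yc: "y \<in> chains (sd X) p" and bd_y: "bd y = 0"
    using fz zc bz by (auto simp: y_def chains_diff bd_diff)
  have flag_y: "s \<in> supp y \<Longrightarrow> s \<noteq> [] \<and> (\<forall>Y\<in>set s. Y \<noteq> {}) \<and> flag s" for s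
    using chains_supp[OF yc] mem_sd_flag by blast
  have w_ne: "s \<in> supp w \<Longrightarrow> s \<noteq> []" for s using chains_supp[OF w(1), of s] by force
  \<comment> \<open>y is homologous to the subdivision of its approximation, which bounds\<close>
  have "lin sd_approx_tuple y = subdiv (chain_map sd_approx y)"
    using fy by (simp add: lin_chain_map sd_approx_tuple_def[abs_def])
  also have "\<dots> = bd (subdiv w)"
    using w(2) fz fw w_ne by (simp add: y_def chain_map_diff bd_subdiv)
  finally have "y = bd (subdiv w) - bd (lin sd_approx_tuple.htpy y)"
    using sd_approx_tuple.bd_lin_htpy[OF fy flag_y] fy by (simp add: bd_y lin_tuple_chain_id)
  also have "\<dots> = bd (subdiv w - lin sd_approx_tuple.htpy y)"
  proof -
    have "fin (lin sd_approx_tuple.htpy y)"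
    proof (rule fin_lin[OF fy])
      fix s assume "s \<in> supp y"
      from sd_approx_tuple.htpy[OF flag_y[OF this]] show "fin (sd_approx_tuple.htpy s)" by simp
    qed
    with fw show ?thesis by (simp add: bd_diff fin_subdiv)
  qed
  finally have "z' = z + bd (subdiv w - lin sd_approx_tuple.htpy y)"
    by (simp add: y_def algebra_simps)
  moreover have "subdiv w - lin sd_approx_tuple.htpy y \<in> chains (sd X) (Suc p)"
    using w(1) yc by (intro chains_diff subdiv_mem_chains lin_in_chains fy)
      (auto intro: sd_approx_tuple_htpy_mem_chains dest: chains_supp)
  ultimately show ?thesis using hcls_add_bd[OF fz(1)] by simp
qed

lemma subdiv_iso_inverse:
  assumes z: "z \<in> cycles X p"
  shows "(THE c. c \<in> homology (sd X) p \<and> hmap X p sd_approx c = hcls X p z) =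
    hcls (sd X) p (subdiv z)"
proof (rule the_equality)
  have zc: "z \<in> chains X p" using z by (simp add: cycles_iff)
  have "subdiv z \<in> cycles (sd X) p" using z by (rule subdiv_mem_cycles)
  then show "hcls (sd X) p (subdiv z) \<in> homology (sd X) p \<and>
      hmap X p sd_approx (hcls (sd X) p (subdiv z)) = hcls X p z"
    using hmap_sd_approx_subdiv[OF z] by (auto simp: homology_def)
  fix c assume c: "c \<in> homology (sd X) p \<and> hmap X p sd_approx c = hcls X p z"
  then obtain z' where z': "z' \<in> cycles (sd X) p" "c = hcls (sd X) p z'"
    by (auto simp: homology_def)
  have "hcls X p (chain_map sd_approx z') = hcls X p (chain_map sd_approx (subdiv z))"
    using c z' hmap_sd_approx_subdiv[OF z]
      hmap_hcls[OF _ sd_approx_image_mem] subdiv_mem_chains[OF zc]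
    by (auto simp: cycles_iff)
  then show "c = hcls (sd X) p (subdiv z)"
    using hcls_sd_eq_if_sd_approx[OF z'(1) \<open>subdiv z \<in> cycles (sd X) p\<close>] z'(2) by simp
qed

end

section \<open>The universal modular symbol\<close>

lemma card_set_del_less: "i < length s \<Longrightarrow> card (set (del i s)) < length s"
  using card_length[of "del i s"] length_del[of i s] by auto

lemma bd_tuple_mem_cycles:
  assumes len: "length s = Suc (Suc p)" and faces: "\<And>i. i < length s \<Longrightarrow> set (del i s) \<in> X"
  shows "bd_tuple s \<in> cycles X p"
proof -
  have "bd_tuple s \<in> chains X p"
  proof (rule chainsI)
    fix u assume "u \<in> supp (bd_tuple s)"
    then obtain i where "i < length s" "u = del i s" using supp_bd_tuple by blast
    then show "length u = Suc p \<and> set u \<in> X" using len faces by (simp add: length_del)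
  qed simp
  then show ?thesis by (simp add: cycles_iff)
qed

lemma chain_map_image_subdiv: "fin c \<Longrightarrow> chain_map (image f) (subdiv c) = subdiv (chain_map f c)"
  by (simp add: chain_map_lin_comm lin_chain_map sd_chain_def chain_map_image_sdc)

lemma Sigma_cplx_eq_sd: "Sigma_cplx n = sd {I. I \<noteq> {} \<and> I \<subset> {0..<n}}"
  by (auto simp: Sigma_cplx_def sd_def)

lemma simplicial_complex_proper_subsets: "simplicial_complex {I. I \<noteq> {} \<and> I \<subset> A}"
  unfolding simplicial_complex_def by blast

lemma hmap_zeta:
  assumes X: "simplicial_complex X" and len: "length vs = Suc (Suc p)"
    and faces: "\<And>I. I \<noteq> {} \<Longrightarrow> I \<subset> {0..<length vs} \<Longrightarrow> (!) vs ` I \<in> X"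
    and f: "\<And>A. A \<in> sd X \<Longrightarrow> f ` A \<in> Y"
  shows "hmap Y p (\<lambda>I. f ((!) vs ` I)) (zeta (length vs)) =
    hcls Y p (chain_map f (subdiv (bd_tuple vs)))"
proof -
  define n where "n = length vs"
  define B where "B = {I. I \<noteq> {} \<and> I \<subset> {0..<n}}"
  have B: "simplicial_complex B"
    unfolding B_def by (rule simplicial_complex_proper_subsets)
  have "bd_tuple [0..<n] \<in> cycles B p"
  proof (rule bd_tuple_mem_cycles)
    show "length [0..<n] = Suc (Suc p)" using len by (simp add: n_def)
    fix i assume "i < length [0..<n]"
    then have "set (del i [0..<n]) \<noteq> {}" "card (set (del i [0..<n])) < card {0..<n}"
      using len card_set_del_less[of i "[0..<n]"] length_del[of i "[0..<n]"] by (auto simp: n_def)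
    then show "set (del i [0..<n]) \<in> B"
      using set_del_subset[of i "[0..<n]"] by (auto simp: B_def)
  qed
  then have z: "subdiv (bd_tuple [0..<n]) \<in> chains (sd B) p"
    by (intro subdiv_mem_chains[OF B]) (simp add: cycles_iff)
  have zeta_eq: "zeta n = hcls (sd B) p (subdiv (bd_tuple [0..<n]))"
    using len by (simp add: zeta_def Sigma_cplx_eq_sd B_def bd_sd_chain n_def)
  have maps_to: "(\<lambda>I. f ((!) vs ` I)) ` A \<in> Y" if "A \<in> sd B" for A
  proof -
    have "image ((!) vs) ` A \<in> sd X"
      using that faces by (intro image_image_mem_sd) (auto simp: B_def n_def)
    from f[OF this] show ?thesis by (simp only: image_image)
  qed
  have chain_eq: "chain_map (\<lambda>I. f ((!) vs ` I)) (subdiv (bd_tuple [0..<n])) =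
      chain_map f (subdiv (bd_tuple vs))"
  proof -
    have "chain_map (\<lambda>I. f ((!) vs ` I)) (subdiv (bd_tuple [0..<n])) =
        chain_map f (chain_map (image ((!) vs)) (subdiv (bd_tuple [0..<n])))"
      by (simp only: chain_map_chain_map[OF fin_subdiv[OF fin_bd_tuple]] comp_def)
    also have "\<dots> = chain_map f (subdiv (chain_map ((!) vs) (bd_tuple [0..<n])))"
      by (simp add: chain_map_image_subdiv)
    also have "chain_map ((!) vs) (bd_tuple [0..<n]) = bd_tuple vs"
      by (simp add: bd_tuple_map[symmetric] n_def map_nth)
    finally show ?thesis .
  qed
  show ?thesis
    using hmap_hcls[OF z maps_to] zeta_eq chain_eq by (simp add: n_def)
qed

section \<open>The complex E* and the Tits building\<close>

lemma (in vector_space) dim_subset_finite: "finite T \<Longrightarrow> S \<subseteq> T \<Longrightarrow> dim S \<le> dim T"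
  by (metis basis_exists dim_le_card finite_subset subset_trans)

lemma cplxEstar_memI:
  assumes "vector_space scale" "Y \<noteq> {}" "finite Y" "Y \<subseteq> M - {0}" "card Y < n"
  shows "Y \<in> cplxEstar scale M n"
  using vector_space.dim_le_card'[OF assms(1,3)] assms by (simp add: cplxEstar_def cplxE_def)

lemma nth_image_mem_cplxEstar:
  assumes V: "vector_space scale" and vs: "set vs \<subseteq> M - {0}"
    and I: "I \<noteq> {}" "I \<subset> {0..<length vs}"
  shows "(!) vs ` I \<in> cplxEstar scale M (length vs)"
proof (rule cplxEstar_memI[OF V])
  have fin: "finite I" using I(2) finite_subset by blast
  then show "finite ((!) vs ` I)" by simp
  have "card ((!) vs ` I) \<le> card I" using fin by (rule card_image_le)
  also have "\<dots> < length vs" using psubset_card_mono[OF _ I(2)] by simp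
  finally show "card ((!) vs ` I) < length vs" .
  have "(!) vs ` I \<subseteq> set vs" using I(2) by (auto intro: nth_mem)
  then show "(!) vs ` I \<subseteq> M - {0}" using vs by (rule subset_trans)
qed (use I in simp)

lemma set_del_mem_cplxEstar:
  assumes V: "vector_space scale" and vs: "set vs \<subseteq> M - {0}"
    and i: "i < length vs" and len: "2 \<le> length vs"
  shows "set (del i vs) \<in> cplxEstar scale M (length vs)"
proof (rule cplxEstar_memI[OF V])
  show "set (del i vs) \<noteq> {}" using i len length_del[of i vs] by auto
  show "set (del i vs) \<subseteq> M - {0}" using set_del_subset vs by (rule subset_trans)
  show "card (set (del i vs)) < length vs" using i by (rule card_set_del_less)
qed simp

lemma simplicial_complex_cplxEstar:
  "vector_space scale \<Longrightarrow> simplicial_complex (cplxEstar scale M n)"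
  unfolding simplicial_complex_def cplxEstar_def cplxE_def
  by (auto dest: vector_space.dim_subset_finite intro: finite_subset order.strict_trans1)

lemma span_image_mem_tits:
  assumes V: "vector_space scale" and dim: "vector_space.dim scale UNIV = n"
    and A: "A \<in> sd (cplxEstar scale M n)"
  shows "module.span scale ` A \<in> tits scale"
proof -
  interpret V: vector_space scale by (rule V)
  have proper: "V.span Y \<noteq> {0} \<and> V.span Y \<noteq> UNIV" if "Y \<in> cplxEstar scale M n" for Y
  proof
    from that obtain y where "y \<in> Y" "y \<noteq> 0"
      by (auto simp: cplxEstar_def cplxE_def)
    then show "V.span Y \<noteq> {0}" using V.span_base by blast
    show "V.span Y \<noteq> UNIV"
    proof
      assume "V.span Y = UNIV"
      then have "V.dim Y = n" by (metis dim V.dim_span)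
      with that show False by (simp add: cplxEstar_def)
    qed
  qed
  have A_props: "A \<noteq> {}" "finite A" "A \<subseteq> cplxEstar scale M n" "\<forall>B\<in>A. \<forall>C\<in>A. B \<subseteq> C \<or> C \<subseteq> B"
    using A by (auto simp: sd_def)
  have "\<forall>W\<in>V.span ` A. V.subspace W \<and> W \<noteq> {0} \<and> W \<noteq> UNIV"
    using A_props(3) proper by auto
  moreover have "\<forall>W1\<in>V.span ` A. \<forall>W2\<in>V.span ` A. W1 \<subseteq> W2 \<or> W2 \<subseteq> W1"
  proof (intro ballI)
    fix W1 W2 assume "W1 \<in> V.span ` A" "W2 \<in> V.span ` A"
    then obtain B C where "B \<in> A" "C \<in> A" "W1 = V.span B" "W2 = V.span C" by auto
    with A_props(4) show "W1 \<subseteq> W2 \<or> W2 \<subseteq> W1" using V.span_mono by metis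
  qed
  ultimately show ?thesis using A_props(1,2) by (simp add: tits_def)
qed

theorem theorem6p1:
  fixes scale :: "'a::idom fract \<Rightarrow> 'v::ab_group_add \<Rightarrow> 'v"
    and M :: "'v set" and n :: nat and Q :: "'v list"
  assumes "noetherian_ring TYPE('a)"
    and "vector_space scale"
    and "fg_A_submodule scale M"
    and "module.span scale M = UNIV"
    and "vector_space.dim scale (UNIV :: 'v set) = n"
    and "n \<ge> 2"
    and "length Q = n"
    and "set Q \<subseteq> M - {0}"
    and "module.span scale (set Q) = UNIV"
  shows "ar scale M n Q = modsym scale Q"
proof -
  note V = assms(2) and dim = assms(5) and len = assms(7) and Q = assms(8)
  define X where "X = cplxEstar scale M n"
  obtain p where n: "n = Suc (Suc p)" using assms(6) by (metis add_2_eq_Suc le_Suc_ex)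
  have X: "simplicial_complex X" unfolding X_def using V by (rule simplicial_complex_cplxEstar)
  have cycle: "bd_tuple Q \<in> cycles X p"
    using len n set_del_mem_cplxEstar[OF V Q] unfolding X_def by (intro bd_tuple_mem_cycles) auto
  have "ar scale M n Q = hmap (tits scale) p (module.span scale)
      (THE c. c \<in> homology (sd X) p \<and> hmap X p sd_approx c = hcls X p (bd_tuple Q))"
    by (simp add: ar_def n X_def conn_rel_cls)
  also have "(THE c. c \<in> homology (sd X) p \<and> hmap X p sd_approx c = hcls X p (bd_tuple Q)) =
      hcls (sd X) p (subdiv (bd_tuple Q))"
    using X cycle by (rule subdiv_iso_inverse)
  also have "hmap (tits scale) p (module.span scale) (hcls (sd X) p (subdiv (bd_tuple Q))) =
      hcls (tits scale) p (chain_map (module.span scale) (subdiv (bd_tuple Q)))"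
    using cycle span_image_mem_tits[OF V dim] unfolding X_def
    by (intro hmap_hcls subdiv_mem_chains[OF X[unfolded X_def]]) (auto simp: cycles_iff)
  also have "\<dots> = hmap (tits scale) p (\<lambda>I. module.span scale ((!) Q ` I)) (zeta (length Q))"
    using len n nth_image_mem_cplxEstar[OF V Q, unfolded len] span_image_mem_tits[OF V dim]
    by (intro hmap_zeta[OF X, symmetric]) (auto simp: X_def)
  also have "\<dots> = modsym scale Q"
    by (simp add: modsym_def len n)
  finally show ?thesis .
qed

end
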